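(* Let $a<b$ and $c<d$ be real numbers, and let $f:[a,b]\times[c,d]\to\mathbb{R}$ be a continuous function whose first partial derivatives $D_1 f, D_2 f$ and mixed second partial derivative $D_2D_1 f$ exist and are continuous on $[a,b]\times[c,d]$. Then \begin{align*} &\int_a^b\int_c^d f(t,s)\,ds\,dt-\frac12\Big[(d-c)\int_a^b\big[f(t,c)+f(t,d)\big]\,dt+(b-a)\int_c^d\big[f(a,s)+f(b,s)\big]\,ds\Big]\\ &\quad+\frac14(b-a)(d-c)\big[f(a,c)+f(a,d)+f(b,c)+f(b,d)\big] \le \frac14(b-a)(d-c)\int_a^b\int_c^d |D_2D_1 f(t,s)|\,ds\,dt . \end{align*}
   Context: $D_1$ and $D_2$ denote partial differentiation with respect to the first and second variable respectively, so $D_2D_1 f=\frac{\partial}{\partial s}\frac{\partial f}{\partial t}$. *)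

theory Defs
  imports "HOL-Analysis.Analysis"
begin

end

theory Submission
  imports Defs
begin

text \<open>Let \<open>E[a,b] g = \<integral>[a,b] g - (b - a)/2 * (g a + g b)\<close> be the error of the trapezoid
rule; integration by parts gives \<open>E[a,b] g = \<integral>[a,b] ((a + b)/2 - x) * g' x dx\<close>. The left-hand
side of the inequality is the iterated error \<open>E[c,d] (s \<mapsto> E[a,b] (t \<mapsto> f t s))\<close>. Applying the
identity in \<open>t\<close>, commuting \<open>E[c,d]\<close> with the \<open>t\<close>-integral and applying it again in \<open>s\<close> turns
this into \<open>\<integral>\<integral> ((a + b)/2 - t) * ((c + d)/2 - s) * D21f t s\<close>, and the two kernels are bounded
by \<open>(b - a)/2\<close> and \<open>(d - c)/2\<close>.\<close>

lemma continuous_on_curry_left: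
  assumes "continuous_on (A \<times> B) (\<lambda>(x, y). h x y)" "x \<in> A"
  shows "continuous_on B (h x)"
  using continuous_on_compose_Pair[OF assms(1), of B "\<lambda>_. x" "\<lambda>y. y"] assms(2)
  by (auto intro: continuous_intros)

lemma continuous_on_curry_right:
  assumes "continuous_on (A \<times> B) (\<lambda>(x, y). h x y)" "y \<in> B"
  shows "continuous_on A (\<lambda>x. h x y)"
  using continuous_on_compose_Pair[OF assms(1), of A "\<lambda>x. x" "\<lambda>_. y"] assms(2)
  by (auto intro: continuous_intros)

lemma integrable_parametric_integral:
  fixes h :: "real \<Rightarrow> real \<Rightarrow> real"
  assumes "continuous_on ({a..b} \<times> {c..d}) (\<lambda>(x, y). h x y)"
  shows "(\<lambda>x. integral {c..d} (h x)) integrable_on {a..b}"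
  using integral_integrable_2dim[of a c b d "\<lambda>(x, y). h x y"] assms
  by (simp add: cbox_Pair_eq)

lemma integral_swap_rectangle:
  fixes h :: "real \<Rightarrow> real \<Rightarrow> real"
  assumes "continuous_on ({a..b} \<times> {c..d}) (\<lambda>(x, y). h x y)"
  shows "integral {a..b} (\<lambda>x. integral {c..d} (h x))
       = integral {c..d} (\<lambda>y. integral {a..b} (\<lambda>x. h x y))"
  using integral_swap_continuous[of a c b d h] assms
  by (simp add: cbox_Pair_eq)

lemma continuous_on_swap_args:
  assumes "continuous_on (A \<times> B) (\<lambda>(x, y). h x y)"
  shows "continuous_on (B \<times> A) (\<lambda>(y, x). h x y)"
  using continuous_on_compose_Pair[OF assms, of "B \<times> A" snd fst]
  by (simp add: case_prod_unfold mem_Times_iff continuous_on_fst continuous_on_snd continuous_on_id)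

definition trapezoid_error :: "real \<Rightarrow> real \<Rightarrow> (real \<Rightarrow> real) \<Rightarrow> real" where
  "trapezoid_error a b g = integral {a..b} g - (b - a) / 2 * (g a + g b)"

lemma trapezoid_error_cong:
  assumes "a \<le> b" "\<And>x. x \<in> {a..b} \<Longrightarrow> g x = h x"
  shows "trapezoid_error a b g = trapezoid_error a b h"
proof -
  have "integral {a..b} g = integral {a..b} h"
    by (rule integral_cong) (rule assms(2))
  then show ?thesis
    using assms by (simp add: trapezoid_error_def)
qed

lemma trapezoid_error_cmult:
  "trapezoid_error a b (\<lambda>x. k * g x) = k * trapezoid_error a b g"
  by (simp add: trapezoid_error_def field_simps)

lemma trapezoid_error_eq_integral_midpoint_kernel:
  assumes "a \<le> b"
    and g': "\<And>x. x \<in> {a..b} \<Longrightarrow> (g has_real_derivative g' x) (at x within {a..b})"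
    and "continuous_on {a..b} g'"
  shows "trapezoid_error a b g = integral {a..b} (\<lambda>x. ((a + b) / 2 - x) * g' x)"
proof -
  have "continuous_on {a..b} g"
    using DERIV_continuous_on g' by blast
  then have integrable: "g integrable_on {a..b}" "(\<lambda>x. ((a + b) / 2 - x) * g' x) integrable_on {a..b}"
    by (auto intro!: integrable_continuous_real continuous_intros assms(3))
  have "((\<lambda>x. ((a + b) / 2 - x) * g' x - g x) has_integral
          ((a + b) / 2 - b) * g b - ((a + b) / 2 - a) * g a) {a..b}"
    by (rule fundamental_theorem_of_calculus[OF \<open>a \<le> b\<close>])
       (auto simp: has_real_derivative_iff_has_vector_derivative[symmetric]
             intro!: derivative_eq_intros g')
  then have "integral {a..b} (\<lambda>x. ((a + b) / 2 - x) * g' x) - integral {a..b} g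
           = ((a + b) / 2 - b) * g b - ((a + b) / 2 - a) * g a"
    by (simp add: integral_diff[OF integrable(2,1), symmetric] integral_unique)
  then show ?thesis
    by (simp add: trapezoid_error_def field_simps)
qed

lemma trapezoid_error_parametric_integral:
  fixes h :: "real \<Rightarrow> real \<Rightarrow> real"
  assumes "a \<le> b" "c \<le> d" and h: "continuous_on ({a..b} \<times> {c..d}) (\<lambda>(x, y). h x y)"
  shows "trapezoid_error c d (\<lambda>y. integral {a..b} (\<lambda>x. h x y))
       = integral {a..b} (\<lambda>x. trapezoid_error c d (h x))"
proof -
  have "(\<lambda>x. h x y) integrable_on {a..b}" if "y \<in> {c..d}" for y
    using continuous_on_curry_right[OF h that] by (rule integrable_continuous_real)
  then have "(\<lambda>x. h x c) integrable_on {a..b}" "(\<lambda>x. h x d) integrable_on {a..b}"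
    using \<open>c \<le> d\<close> by auto
  moreover have "(\<lambda>x. integral {c..d} (h x)) integrable_on {a..b}"
    using h by (rule integrable_parametric_integral)
  ultimately show ?thesis
    unfolding trapezoid_error_def integral_swap_rectangle[OF h, symmetric]
    by (simp only: integral_diff integral_add integral_mult_right integrable_add
                   integrable_on_mult_right)
qed

lemma abs_midpoint_diff_le:
  fixes x :: real
  assumes "x \<in> {a..b}"
  shows "\<bar>(a + b) / 2 - x\<bar> \<le> (b - a) / 2"
  using assms by (auto simp: abs_if field_simps)

lemma abs_integral_midpoint_kernel_le:
  fixes h :: "real \<Rightarrow> real"
  assumes "continuous_on {a..b} h"
  shows "\<bar>integral {a..b} (\<lambda>x. ((a + b) / 2 - x) * h x)\<bar> \<le> (b - a) / 2 * integral {a..b} (\<lambda>x. \<bar>h x\<bar>)"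
proof -
  have "norm (integral {a..b} (\<lambda>x. ((a + b) / 2 - x) * h x)) \<le> integral {a..b} (\<lambda>x. (b - a) / 2 * \<bar>h x\<bar>)"
  proof (rule integral_norm_bound_integral)
    fix x assume "x \<in> {a..b}"
    then show "norm (((a + b) / 2 - x) * h x) \<le> (b - a) / 2 * \<bar>h x\<bar>"
      unfolding real_norm_def abs_mult by (intro mult_right_mono abs_midpoint_diff_le) auto
  qed (auto intro!: integrable_continuous_real continuous_intros assms)
  then show ?thesis
    by simp
qed

lemma iterated_trapezoid_error_eq:
  fixes f :: "real \<Rightarrow> real \<Rightarrow> real"
  assumes "a \<le> b" "c \<le> d" and f: "continuous_on ({a..b} \<times> {c..d}) (\<lambda>(t, s). f t s)"
  shows "trapezoid_error c d (\<lambda>s. trapezoid_error a b (\<lambda>t. f t s))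
       = integral {a..b} (\<lambda>t. integral {c..d} (\<lambda>s. f t s))
          - 1/2 * ((d - c) * integral {a..b} (\<lambda>t. f t c + f t d)
                   + (b - a) * integral {c..d} (\<lambda>s. f a s + f b s))
          + 1/4 * (b - a) * (d - c) * (f a c + f a d + f b c + f b d)"
proof -
  have slice_t: "(\<lambda>t. f t s) integrable_on {a..b}" if "s \<in> {c..d}" for s
    using continuous_on_curry_right[OF f that] by (rule integrable_continuous_real)
  have slice_s: "(\<lambda>s. f t s) integrable_on {c..d}" if "t \<in> {a..b}" for t
    using continuous_on_curry_left[OF f that] by (rule integrable_continuous_real)
  have "(\<lambda>s. integral {a..b} (\<lambda>t. f t s)) integrable_on {c..d}"
    using integrable_parametric_integral[OF continuous_on_swap_args[OF f]] .
  moreover have "(\<lambda>s. f a s) integrable_on {c..d}" "(\<lambda>s. f b s) integrable_on {c..d}"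
    using slice_s \<open>a \<le> b\<close> by auto
  moreover have "(\<lambda>t. f t c) integrable_on {a..b}" "(\<lambda>t. f t d) integrable_on {a..b}"
    using slice_t \<open>c \<le> d\<close> by auto
  ultimately show ?thesis
    unfolding trapezoid_error_def integral_swap_rectangle[OF f]
    by (simp only: integral_diff integral_add integral_mult_right integrable_add
                   integrable_on_mult_right) (simp add: field_simps)
qed

lemma iterated_trapezoid_error_eq_kernel_integral:
  fixes f D1f D21f :: "real \<Rightarrow> real \<Rightarrow> real"
  assumes "a \<le> b" "c \<le> d"
    and D1f: "\<And>t s. t \<in> {a..b} \<Longrightarrow> s \<in> {c..d} \<Longrightarrow>
           ((\<lambda>\<tau>. f \<tau> s) has_real_derivative D1f t s) (at t within {a..b})"
    and D21f: "\<And>t s. t \<in> {a..b} \<Longrightarrow> s \<in> {c..d} \<Longrightarrow>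
           ((\<lambda>\<sigma>. D1f t \<sigma>) has_real_derivative D21f t s) (at s within {c..d})"
    and cont_D1f: "continuous_on ({a..b} \<times> {c..d}) (\<lambda>(t, s). D1f t s)"
    and cont_D21f: "continuous_on ({a..b} \<times> {c..d}) (\<lambda>(t, s). D21f t s)"
  shows "trapezoid_error c d (\<lambda>s. trapezoid_error a b (\<lambda>t. f t s))
       = integral {a..b} (\<lambda>t. ((a + b) / 2 - t) *
           integral {c..d} (\<lambda>s. ((c + d) / 2 - s) * D21f t s))"
proof -
  have "trapezoid_error c d (\<lambda>s. trapezoid_error a b (\<lambda>t. f t s))
      = trapezoid_error c d (\<lambda>s. integral {a..b} (\<lambda>t. ((a + b) / 2 - t) * D1f t s))"
    using \<open>c \<le> d\<close>
  proof (rule trapezoid_error_cong)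
    fix s assume "s \<in> {c..d}"
    then show "trapezoid_error a b (\<lambda>t. f t s) = integral {a..b} (\<lambda>t. ((a + b) / 2 - t) * D1f t s)"
      using \<open>a \<le> b\<close> D1f continuous_on_curry_right[OF cont_D1f]
      by (intro trapezoid_error_eq_integral_midpoint_kernel) auto
  qed
  also have "\<dots> = integral {a..b} (\<lambda>t. trapezoid_error c d (\<lambda>s. ((a + b) / 2 - t) * D1f t s))"
    using \<open>a \<le> b\<close> \<open>c \<le> d\<close> cont_D1f
    by (intro trapezoid_error_parametric_integral) (auto intro!: continuous_intros simp: case_prod_unfold)
  also have "\<dots> = integral {a..b} (\<lambda>t. ((a + b) / 2 - t) * trapezoid_error c d (D1f t))"
    by (simp only: trapezoid_error_cmult)
  also have "\<dots> = integral {a..b} (\<lambda>t. ((a + b) / 2 - t) *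
           integral {c..d} (\<lambda>s. ((c + d) / 2 - s) * D21f t s))"
  proof (rule integral_cong)
    fix t assume "t \<in> {a..b}"
    then show "((a + b) / 2 - t) * trapezoid_error c d (D1f t)
             = ((a + b) / 2 - t) * integral {c..d} (\<lambda>s. ((c + d) / 2 - s) * D21f t s)"
      using \<open>c \<le> d\<close> D21f continuous_on_curry_left[OF cont_D21f]
      by (subst trapezoid_error_eq_integral_midpoint_kernel) auto
  qed
  finally show ?thesis .
qed

lemma integral_product_midpoint_kernel_le:
  fixes h :: "real \<Rightarrow> real \<Rightarrow> real"
  assumes "a \<le> b" and h: "continuous_on ({a..b} \<times> {c..d}) (\<lambda>(t, s). h t s)"
  shows "integral {a..b} (\<lambda>t. ((a + b) / 2 - t) * integral {c..d} (\<lambda>s. ((c + d) / 2 - s) * h t s))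
       \<le> (b - a) / 2 * ((d - c) / 2) * integral {a..b} (\<lambda>t. integral {c..d} (\<lambda>s. \<bar>h t s\<bar>))"
proof -
  let ?G = "\<lambda>t. integral {c..d} (\<lambda>s. ((c + d) / 2 - s) * h t s)"
  let ?H = "\<lambda>t. integral {c..d} (\<lambda>s. \<bar>h t s\<bar>)"
  have "(\<lambda>t. integral {c..d} (\<lambda>s. ((a + b) / 2 - t) * (((c + d) / 2 - s) * h t s))) integrable_on {a..b}"
    using h by (intro integrable_parametric_integral) (auto intro!: continuous_intros simp: case_prod_unfold)
  then have integrable_lhs: "(\<lambda>t. ((a + b) / 2 - t) * ?G t) integrable_on {a..b}"
    by (simp only: integral_mult_right)
  have "?H integrable_on {a..b}"
    using h by (intro integrable_parametric_integral) (auto intro!: continuous_intros simp: case_prod_unfold)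
  then have integrable_rhs: "(\<lambda>t. (b - a) / 2 * ((d - c) / 2 * ?H t)) integrable_on {a..b}"
    by (intro integrable_on_mult_right)
  have "((a + b) / 2 - t) * ?G t \<le> (b - a) / 2 * ((d - c) / 2 * ?H t)" if t: "t \<in> {a..b}" for t
  proof -
    have "((a + b) / 2 - t) * ?G t \<le> \<bar>(a + b) / 2 - t\<bar> * \<bar>?G t\<bar>"
      by (metis abs_ge_self abs_mult)
    also have "\<dots> \<le> (b - a) / 2 * ((d - c) / 2 * ?H t)"
      using \<open>a \<le> b\<close> abs_midpoint_diff_le[OF t]
        abs_integral_midpoint_kernel_le[OF continuous_on_curry_left[OF h t]]
      by (intro mult_mono) auto
    finally show ?thesis .
  qed
  then have "integral {a..b} (\<lambda>t. ((a + b) / 2 - t) * ?G t)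
           \<le> integral {a..b} (\<lambda>t. (b - a) / 2 * ((d - c) / 2 * ?H t))"
    by (intro integral_le integrable_lhs integrable_rhs)
  then show ?thesis
    by (simp only: integral_mult_right mult.assoc)
qed

theorem corollary3p1:
  fixes a b c d :: real
    and f D1f D2f D21f :: "real \<Rightarrow> real \<Rightarrow> real"
  assumes "a < b" and "c < d"
    and "continuous_on ({a..b} \<times> {c..d}) (\<lambda>(t, s). f t s)"
    and "\<And>t s. t \<in> {a..b} \<Longrightarrow> s \<in> {c..d} \<Longrightarrow>
           ((\<lambda>\<tau>. f \<tau> s) has_real_derivative D1f t s) (at t within {a..b})"
    and "\<And>t s. t \<in> {a..b} \<Longrightarrow> s \<in> {c..d} \<Longrightarrow>
           ((\<lambda>\<sigma>. f t \<sigma>) has_real_derivative D2f t s) (at s within {c..d})"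
    and "\<And>t s. t \<in> {a..b} \<Longrightarrow> s \<in> {c..d} \<Longrightarrow>
           ((\<lambda>\<sigma>. D1f t \<sigma>) has_real_derivative D21f t s) (at s within {c..d})"
    and "continuous_on ({a..b} \<times> {c..d}) (\<lambda>(t, s). D1f t s)"
    and "continuous_on ({a..b} \<times> {c..d}) (\<lambda>(t, s). D2f t s)"
    and "continuous_on ({a..b} \<times> {c..d}) (\<lambda>(t, s). D21f t s)"
  shows "integral {a..b} (\<lambda>t. integral {c..d} (\<lambda>s. f t s))
          - 1/2 * ((d - c) * integral {a..b} (\<lambda>t. f t c + f t d)
                   + (b - a) * integral {c..d} (\<lambda>s. f a s + f b s))
          + 1/4 * (b - a) * (d - c) * (f a c + f a d + f b c + f b d)
        \<le> 1/4 * (b - a) * (d - c) *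
           integral {a..b} (\<lambda>t. integral {c..d} (\<lambda>s. \<bar>D21f t s\<bar>))"
proof -
  have "a \<le> b" "c \<le> d"
    using assms(1,2) by auto
  then have "trapezoid_error c d (\<lambda>s. trapezoid_error a b (\<lambda>t. f t s))
      = integral {a..b} (\<lambda>t. ((a + b) / 2 - t) *
           integral {c..d} (\<lambda>s. ((c + d) / 2 - s) * D21f t s))"
    using assms(4,6,7,9) by (rule iterated_trapezoid_error_eq_kernel_integral)
  also have "\<dots> \<le> (b - a) / 2 * ((d - c) / 2) *
           integral {a..b} (\<lambda>t. integral {c..d} (\<lambda>s. \<bar>D21f t s\<bar>))"
    using \<open>a \<le> b\<close> assms(9) by (rule integral_product_midpoint_kernel_le)
  finally show ?thesis
    using iterated_trapezoid_error_eq[OF \<open>a \<le> b\<close> \<open>c \<le> d\<close> assms(3)] by simp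
qed

end
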